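(* Let $d\ge1$ and let $X,X'$ be $d$-dimensional random vectors such that $(X,X')$ is an exchangeable pair (i.e. $(X,X')$ and $(X',X)$ have the same joint distribution). Let $D=X-X'$ and suppose that $$\mathbb E[D\mid X]=\lambda\Lambda X+\lambda R$$ for some $0<\lambda<1$, some invertible $d\times d$ matrix $\Lambda$ and some random vector $R$. Let $\ell=e_1^t\Lambda^{-1}$ be the first row of $\Lambda^{-1}$, let $X_1$ and $D_1$ denote the first components of $X$ and $D$, and let $Z$ be a standard normal random variable. Then $$d_K(X_1,Z)\le \mathbb E\Big[\Big|1-\frac{1}{2\lambda}\mathbb E[\ell D\,D_1\mid X]\Big|\Big]+\frac1\lambda\mathbb E\Big[\big|\mathbb E[|\ell D|\,D_1\mid X]\big|\Big]+\frac{\sqrt{2\pi}}{4}\mathbb E[|\ell R|],$$ where $\ell D$ and $\ell R$ denote the Euclidean scalar products of $\ell$ (as a vector) with $D$ and $R$.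
   Context: $d_K(X,Y)=\sup_{z\in\mathbb R}|\mathbb P(X\le z)-\mathbb P(Y\le z)|$ denotes the Kolmogorov distance. *)

theory Defs
  imports "HOL-Probability.Probability"
begin

definition kolmogorov_dist :: "real measure \<Rightarrow> real measure \<Rightarrow> real" where
  "kolmogorov_dist P Q = (SUP z. \<bar>measure P {..z} - measure Q {..z}\<bar>)"

definition sigma_rv :: "'a measure \<Rightarrow> ('a \<Rightarrow> 'b::topological_space) \<Rightarrow> 'a measure" where
  "sigma_rv M X = vimage_algebra (space M) X borel"

end

(* Stein's method for exchangeable pairs.  Let W = X_i and, for fixed z, let f be the bounded
   solution of the Stein equation f'(w) - w f(w) = 1{w <= z} - Phi(z), so that
   P(W <= z) - Phi(z) = E[f'(W) - W f(W)].  By exchangeability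
   E[(ell.D) (f(W) - f(W'))] = 2 E[(ell.D) f(W)], and the regression condition together with
   ell Lambda = e_i turns this into 2 lam E[(W + ell.R) f(W)].  Solving for E[W f(W)] splits the
   error into three terms.  The first, E[f'(W) (1 - (ell.D) D_i / (2 lam))], is handled by
   conditioning on X and |f'| <= 1; the last, E[(ell.R) f(W)], by 0 <= f <= sqrt(2 pi) / 4.
   The middle one is the first-order Taylor remainder of f along W - W' = D_i.  Since f' is a
   difference of nondecreasing functions whose sum G satisfies |G - Phi(z)| <= 1, it is at most
   E[|ell.D| D_i (G(W) - G(W'))], which exchangeability turns into
   2 E[(G(W) - Phi(z)) E[|ell.D| D_i | X]]. *)

theory Submission
  imports Defs "HOL-Real_Asymp.Real_Asymp"
begin

section \<open>The standard normal distribution function\<close>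

abbreviation \<Phi> :: "real \<Rightarrow> real" where
  "\<Phi> \<equiv> cdf std_normal_distribution"

interpretation std_normal: real_distribution std_normal_distribution
  by (rule real_dist_normal_dist)

lemma std_normal_density_pos: "0 < std_normal_density x"
  by (simp add: normal_density_pos)

lemma std_normal_density_minus [simp]: "std_normal_density (- x) = std_normal_density x"
  by (simp add: std_normal_density_def)

lemma has_real_derivative_std_normal_density [derivative_intros]:
  "(f has_real_derivative f') (at x within S) \<Longrightarrow>
   ((\<lambda>u. std_normal_density (f u)) has_real_derivative - f x * std_normal_density (f x) * f')
     (at x within S)"
  unfolding std_normal_density_def
  by (auto intro!: derivative_eq_intros simp: power2_eq_square field_simps)

lemma continuous_on_std_normal_density [continuous_intros]:
  "continuous_on S f \<Longrightarrow> continuous_on S (\<lambda>x. std_normal_density (f x))"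
  unfolding normal_density_def by (intro continuous_intros) simp_all

lemma std_normal_cdf_diff:
  assumes "a \<le> b"
  shows "\<Phi> b - \<Phi> a = (LBINT u=a..b. std_normal_density u)"
proof (cases "a = b")
  case False
  then have "\<Phi> b - \<Phi> a = measure std_normal_distribution {a<..b}"
    using assms by (intro std_normal.cdf_diff_eq) simp
  also have "\<dots> = (\<integral>u. indicator {a<..b} u \<partial>std_normal_distribution)"
    by simp
  also have "\<dots> = (\<integral>u. std_normal_density u * indicator {a<..b} u \<partial>lborel)"
    by (subst integral_density) auto
  also have "\<dots> = (LBINT u=a..b. std_normal_density u)"
    unfolding interval_integral_Ioc[OF assms] set_lebesgue_integral_def
    by (intro Bochner_Integration.integral_cong) (simp_all add: mult.commute)
  finally show ?thesis .
qed simp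

lemma has_real_derivative_std_normal_cdf: "(\<Phi> has_real_derivative std_normal_density x) (at x)"
proof -
  have "((\<lambda>u. LBINT y=x - 1..u. std_normal_density y) has_vector_derivative std_normal_density x)
      (at x within {x - 1..x + 1})"
    by (rule interval_integral_FTC2) (auto simp: normal_density_def intro!: continuous_intros)
  then have "((\<lambda>u. \<Phi> (x - 1) + (LBINT y=x - 1..u. std_normal_density y)) has_real_derivative
      std_normal_density x) (at x)"
    using at_within_interior[of x "{x - 1..x + 1}"]
    by (auto simp: has_real_derivative_iff_has_vector_derivative intro!: derivative_eq_intros)
  then show ?thesis
  proof (rule has_field_derivative_transform_within_open[where S = "{x - 1<..}"])
    fix u assume "u \<in> {x - 1<..}"
    then show "\<Phi> (x - 1) + (LBINT y=x - 1..u. std_normal_density y) = \<Phi> u"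
      using std_normal_cdf_diff[of "x - 1" u] by simp
  qed simp_all
qed

lemma has_real_derivative_std_normal_cdf_comp [derivative_intros]:
  "(f has_real_derivative f') (at x within S) \<Longrightarrow>
   ((\<lambda>u. \<Phi> (f u)) has_real_derivative std_normal_density (f x) * f') (at x within S)"
  using DERIV_chain2[OF has_real_derivative_std_normal_cdf] .

lemma continuous_on_std_normal_cdf [continuous_intros]:
  "continuous_on S f \<Longrightarrow> continuous_on S (\<lambda>x. \<Phi> (f x))"
proof -
  have "continuous_on UNIV \<Phi>"
    using DERIV_isCont[OF has_real_derivative_std_normal_cdf]
    by (simp add: continuous_at_imp_continuous_on)
  then show "continuous_on S f \<Longrightarrow> continuous_on S (\<lambda>x. \<Phi> (f x))"
    by (rule continuous_on_compose2) auto
qed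

lemma std_normal_cdf_minus: "\<Phi> (- x) = 1 - \<Phi> x"
proof -
  have "((\<lambda>u. \<Phi> (- u) + \<Phi> u) has_real_derivative 0) (at u)" for u
    using DERIV_add[OF DERIV_chain2[OF has_real_derivative_std_normal_cdf
        DERIV_minus[OF DERIV_ident]] has_real_derivative_std_normal_cdf]
    by simp
  then have const: "(\<lambda>u. \<Phi> (- u) + \<Phi> u) = (\<lambda>_. \<Phi> (- x) + \<Phi> x)"
    using DERIV_isconst_all by blast
  have "((\<lambda>u. \<Phi> (- u) + \<Phi> u) \<longlongrightarrow> 0 + 1) at_top"
    by (intro tendsto_add filterlim_compose[OF std_normal.cdf_lim_at_bot]
        filterlim_uminus_at_bot_at_top std_normal.cdf_lim_at_top_prob)
  then have "\<Phi> (- x) + \<Phi> x = 1"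
    unfolding const by (simp add: tendsto_const_iff)
  then show ?thesis by simp
qed

lemma std_normal_cdf_0: "\<Phi> 0 = 1 / 2"
  using std_normal_cdf_minus[of 0] by simp

lemma nonneg_if_deriv_nonpos_tendsto_0:
  fixes h h' :: "real \<Rightarrow> real"
  assumes "\<And>x. a \<le> x \<Longrightarrow> (h has_real_derivative h' x) (at x)"
    and "\<And>x. a \<le> x \<Longrightarrow> h' x \<le> 0"
    and "(h \<longlongrightarrow> 0) at_top"
  shows "0 \<le> h a"
proof -
  have "h y \<le> h a" if "a \<le> y" for y
    using DERIV_nonpos_imp_nonincreasing[of a y h] that assms(1,2) by fastforce
  then have "eventually (\<lambda>y. h y \<le> h a) at_top"
    by (auto simp: eventually_at_top_linorder)
  then show ?thesis
    using tendsto_upperbound[OF assms(3)] by auto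
qed

definition mills_ratio :: "real \<Rightarrow> real" where
  "mills_ratio w = (1 - \<Phi> w) / std_normal_density w"

lemma mills_ratio_nonneg: "0 \<le> mills_ratio w"
  using std_normal.cdf_bounded_prob[of w] std_normal_density_pos[of w]
  by (simp add: mills_ratio_def)

lemma mills_ratio_minus: "mills_ratio (- w) = \<Phi> w / std_normal_density w"
  by (simp add: mills_ratio_def std_normal_cdf_minus)

lemma has_real_derivative_mills_ratio:
  "(mills_ratio has_real_derivative w * mills_ratio w - 1) (at w)"
  unfolding mills_ratio_def [abs_def]
  using std_normal_density_pos[of w]
  by (auto intro!: derivative_eq_intros simp: field_simps power2_eq_square)

lemma has_real_derivative_mills_ratio_comp [derivative_intros]:
  "(f has_real_derivative f') (at x within S) \<Longrightarrow>
   ((\<lambda>u. mills_ratio (f u)) has_real_derivative (f x * mills_ratio (f x) - 1) * f') (at x within S)"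
  using DERIV_chain2[OF has_real_derivative_mills_ratio] .

lemma mills_ratio_upper:
  assumes "0 < w"
  shows "w * mills_ratio w \<le> 1"
proof -
  define h where "h x = std_normal_density x / x - (1 - \<Phi> x)" for x
  have "0 \<le> h w"
  proof (rule nonneg_if_deriv_nonpos_tendsto_0[where h = h
      and h' = "\<lambda>x. - std_normal_density x / x\<^sup>2"])
    fix x assume "w \<le> x"
    with assms have "x \<noteq> 0" by auto
    then show "(h has_real_derivative - std_normal_density x / x\<^sup>2) (at x)"
      unfolding h_def by (auto intro!: derivative_eq_intros simp: field_simps power2_eq_square)
    show "- std_normal_density x / x\<^sup>2 \<le> 0"
      by simp
  next
    have "((\<lambda>x. std_normal_density x / x) \<longlongrightarrow> 0) at_top"
      unfolding std_normal_density_def by real_asymp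
    then have "(h \<longlongrightarrow> 0 - (1 - 1)) at_top"
      unfolding h_def by (intro tendsto_diff tendsto_const std_normal.cdf_lim_at_top_prob)
    then show "(h \<longlongrightarrow> 0) at_top"
      by simp
  qed
  then show ?thesis
    using assms std_normal_density_pos[of w]
    by (simp add: h_def mills_ratio_def field_simps)
qed

lemma mills_ratio_lower: "w \<le> (1 + w\<^sup>2) * mills_ratio w"
proof -
  define h where "h x = (1 - \<Phi> x) - x * std_normal_density x / (1 + x\<^sup>2)" for x
  have "0 \<le> h w"
  proof (rule nonneg_if_deriv_nonpos_tendsto_0[where h = h
      and h' = "\<lambda>x. - 2 * std_normal_density x / (1 + x\<^sup>2)\<^sup>2"])
    fix x :: real
    have "0 < 1 + x\<^sup>2"
      by (simp add: add_pos_nonneg)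
    moreover have "(1 + x\<^sup>2)\<^sup>2 = 1 + (x * (x * (x * x)) + x * (x * 2))"
      by (simp add: power2_eq_square algebra_simps)
    ultimately have nz: "1 + x\<^sup>2 \<noteq> 0" "1 + (x * (x * (x * x)) + x * (x * 2)) \<noteq> 0"
      by auto
    show "(h has_real_derivative - 2 * std_normal_density x / (1 + x\<^sup>2)\<^sup>2) (at x)"
      unfolding h_def
      by (rule DERIV_cong, (rule derivative_eq_intros refl | simp add: nz)+)
        (use nz in \<open>simp add: field_simps power2_eq_square\<close>)
    show "- 2 * std_normal_density x / (1 + x\<^sup>2)\<^sup>2 \<le> 0"
      by simp
  next
    have "((\<lambda>x. x * std_normal_density x / (1 + x\<^sup>2)) \<longlongrightarrow> 0) at_top"
      unfolding std_normal_density_def by real_asymp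
    then have "(h \<longlongrightarrow> (1 - 1) - 0) at_top"
      unfolding h_def by (intro tendsto_diff tendsto_const std_normal.cdf_lim_at_top_prob)
    then show "(h \<longlongrightarrow> 0) at_top"
      by simp
  qed
  moreover have "0 < 1 + w\<^sup>2"
    by (simp add: add_pos_nonneg)
  ultimately show ?thesis
    using std_normal_density_pos[of w]
    by (simp add: h_def mills_ratio_def field_simps)
qed

lemma times_mills_ratio_le_1: "w * mills_ratio w \<le> 1"
proof (cases "0 < w")
  case False
  then have "w * mills_ratio w \<le> 0"
    using mills_ratio_nonneg[of w] by (simp add: mult_nonpos_nonneg)
  then show ?thesis
    by simp
qed (rule mills_ratio_upper)

lemma mono_times_mills_ratio: "mono (\<lambda>w. w * mills_ratio w)"
proof (rule monoI)
  have deriv: "((\<lambda>w. w * mills_ratio w) has_real_derivative (1 + t\<^sup>2) * mills_ratio t - t) (at t)"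
    for t
    by (rule DERIV_cong[OF DERIV_mult[OF DERIV_ident has_real_derivative_mills_ratio]])
       (simp add: algebra_simps power2_eq_square)
  show "x * mills_ratio x \<le> y * mills_ratio y" if "x \<le> y" for x y
    using deriv mills_ratio_lower
    by (intro DERIV_nonneg_imp_nondecreasing[OF that]) (metis diff_ge_0_iff_ge)
qed

lemma has_real_derivative_std_normal_slope:
  "((\<lambda>t. 4 * (2 * \<Phi> t - 1) / sqrt (2 * pi) - t) has_real_derivative 4 / pi * exp (- t\<^sup>2 / 2) - 1)
    (at t)"
proof -
  have "((\<lambda>t. 4 * (2 * \<Phi> t - 1) / sqrt (2 * pi) - t) has_real_derivative
      4 * (2 * std_normal_density t) / sqrt (2 * pi) - 1) (at t)"
    by (auto intro!: derivative_eq_intros simp: field_simps)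
  moreover have "4 * (2 * std_normal_density t) / sqrt (2 * pi) - 1 = 4 / pi * exp (- t\<^sup>2 / 2) - 1"
  proof -
    have "sqrt (2 * pi) * sqrt (2 * pi) = 2 * pi"
      by simp
    then show ?thesis
      unfolding std_normal_density_def by (simp add: field_simps)
  qed
  ultimately show ?thesis
    by simp
qed

text \<open>The function \<open>F t = (2 * \<Phi> t - 1)\<^sup>2 - 1 + exp (- t\<^sup>2 / 2)\<close> vanishes at \<open>0\<close> and at
  infinity and has derivative \<open>exp (- t\<^sup>2 / 2) * u t\<close>; this sign pattern of \<open>u\<close> shows
  \<open>F \<ge> 0\<close> on \<open>[0, \<infinity>)\<close>.\<close>

lemma std_normal_slope_sign_pattern:
  fixes z :: real
  defines "u \<equiv> \<lambda>t. 4 * (2 * \<Phi> t - 1) / sqrt (2 * pi) - t"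
  assumes "0 \<le> z"
  shows "(\<forall>s\<in>{0..z}. 0 \<le> u s) \<or> (\<forall>s\<ge>z. u s \<le> 0)"
proof -
  \<comment> \<open>the zero of the derivative of \<open>u\<close> on \<open>[0, \<infinity>)\<close>\<close>
  define t0 where "t0 = sqrt (2 * ln (4 / pi))"
  have "0 < ln (4 / pi)"
    using pi_less_4 by simp
  then have "0 \<le> t0" and t0_sq: "t0\<^sup>2 = 2 * ln (4 / pi)"
    by (simp_all add: t0_def)
  have "exp (- t0\<^sup>2 / 2) = pi / 4"
    by (simp add: t0_sq exp_minus)
  then have u': "(u has_real_derivative 4 / pi * (exp (- t\<^sup>2 / 2) - exp (- t0\<^sup>2 / 2))) (at t)" for t
    using has_real_derivative_std_normal_slope[of t, folded u_def] by (simp add: field_simps)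
  have u_mono: "u s \<le> u t" if "0 \<le> s" "s \<le> t" "t \<le> t0" for s t
  proof (rule DERIV_nonneg_imp_nondecreasing[OF \<open>s \<le> t\<close>])
    fix x assume "s \<le> x" "x \<le> t"
    with that have "x\<^sup>2 \<le> t0\<^sup>2"
      by (intro power_mono) auto
    then show "\<exists>y. (u has_real_derivative y) (at x) \<and> 0 \<le> y"
      using u'[of x] by (intro exI[of _ "4 / pi * (exp (- x\<^sup>2 / 2) - exp (- t0\<^sup>2 / 2))"]) auto
  qed
  have u_antimono: "u t \<le> u s" if "t0 \<le> s" "s \<le> t" for s t
  proof (rule DERIV_nonpos_imp_nonincreasing[OF \<open>s \<le> t\<close>])
    fix x assume "s \<le> x" "x \<le> t"
    with that \<open>0 \<le> t0\<close> have "t0\<^sup>2 \<le> x\<^sup>2"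
      by (intro power_mono) auto
    then show "\<exists>y. (u has_real_derivative y) (at x) \<and> y \<le> 0"
      using u'[of x] by (intro exI[of _ "4 / pi * (exp (- x\<^sup>2 / 2) - exp (- t0\<^sup>2 / 2))"])
        (auto simp: divide_nonpos_pos)
  qed
  have "u 0 = 0"
    by (simp add: u_def std_normal_cdf_0)
  show ?thesis
  proof (cases "0 \<le> u z")
    case True
    have "0 \<le> u s" if "s \<in> {0..z}" for s
      using that u_mono[of 0 s] u_antimono[of s z] True \<open>u 0 = 0\<close> by (cases "s \<le> t0") auto
    then show ?thesis by blast
  next
    case False
    then have "t0 < z"
      using u_mono[of 0 z] \<open>u 0 = 0\<close> \<open>0 \<le> z\<close> by (cases "z \<le> t0") simp_all
    then show ?thesis
      using u_antimono[of z] False by fastforce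
  qed
qed

lemma std_normal_cdf_sq_lower:
  assumes "0 \<le> z"
  shows "1 - exp (- z\<^sup>2 / 2) \<le> (2 * \<Phi> z - 1)\<^sup>2"
proof -
  define u where "u t = 4 * (2 * \<Phi> t - 1) / sqrt (2 * pi) - t" for t
  define F where "F t = (2 * \<Phi> t - 1)\<^sup>2 - 1 + exp (- t\<^sup>2 / 2)" for t
  have F': "(F has_real_derivative exp (- t\<^sup>2 / 2) * u t) (at t)" for t
  proof -
    have "(F has_real_derivative 2 * (2 * \<Phi> t - 1) * (2 * std_normal_density t)
        - t * exp (- t\<^sup>2 / 2)) (at t)"
      unfolding F_def by (auto intro!: derivative_eq_intros)
    moreover have "2 * (2 * \<Phi> t - 1) * (2 * std_normal_density t) - t * exp (- t\<^sup>2 / 2)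
        = exp (- t\<^sup>2 / 2) * u t"
      by (simp add: u_def std_normal_density_def[of t] field_simps)
    ultimately show ?thesis
      by simp
  qed
  have "0 \<le> F z"
    using std_normal_slope_sign_pattern[OF assms, folded u_def]
  proof
    assume "\<forall>s\<in>{0..z}. 0 \<le> u s"
    then have "F 0 \<le> F z"
      using DERIV_nonneg_imp_nondecreasing[OF assms, of F] F' by fastforce
    then show "0 \<le> F z"
      by (simp add: F_def std_normal_cdf_0)
  next
    assume u_nonpos: "\<forall>s\<ge>z. u s \<le> 0"
    show "0 \<le> F z"
    proof (rule nonneg_if_deriv_nonpos_tendsto_0[where h = F])
      show "(F has_real_derivative exp (- t\<^sup>2 / 2) * u t) (at t)" for t
        by (rule F')
      show "exp (- t\<^sup>2 / 2) * u t \<le> 0" if "z \<le> t" for t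
        using u_nonpos that by (simp add: mult_nonneg_nonpos)
      have "((\<lambda>t::real. exp (- t\<^sup>2 / 2)) \<longlongrightarrow> 0) at_top"
        by real_asymp
      then have "(F \<longlongrightarrow> (2 * 1 - 1)\<^sup>2 - 1 + 0) at_top"
        unfolding F_def by (intro tendsto_intros std_normal.cdf_lim_at_top_prob)
      then show "(F \<longlongrightarrow> 0) at_top"
        by simp
    qed
  qed
  then show ?thesis
    by (simp add: F_def)
qed

lemma std_normal_cdf_times_compl_le: "\<Phi> z * (1 - \<Phi> z) \<le> exp (- z\<^sup>2 / 2) / 4"
proof -
  have "\<Phi> z * (1 - \<Phi> z) \<le> exp (- z\<^sup>2 / 2) / 4" if "0 \<le> z" for z
    using std_normal_cdf_sq_lower[OF that] by (simp add: power2_eq_square algebra_simps)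
  from this[of z] this[of "- z"] show ?thesis
    by (cases "0 \<le> z") (auto simp: std_normal_cdf_minus mult.commute)
qed

section \<open>The solution of the Stein equation\<close>

lemma abs_linear_remainder_le:
  fixes f f' G :: "real \<Rightarrow> real"
  assumes "continuous_on UNIV f" "finite S"
    and "\<And>w. w \<notin> S \<Longrightarrow> (f has_real_derivative f' w) (at w)"
    and "\<And>x s t y. x \<le> s \<Longrightarrow> s \<le> y \<Longrightarrow> x \<le> t \<Longrightarrow> t \<le> y \<Longrightarrow> \<bar>f' s - f' t\<bar> \<le> G y - G x"
  shows "\<bar>(a - b) * f' a - (f a - f b)\<bar> \<le> (a - b) * (G a - G b)"
proof -
  have increment: "\<bar>f y - f x - (y - x) * f' c\<bar> \<le> (y - x) * (G y - G x)"
    if "x \<le> y" "c \<in> {x, y}" for x y c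
  proof -
    have "(f' has_integral f y - f x) {x..y}"
      using assms(1-3) \<open>x \<le> y\<close>
      by (intro fundamental_theorem_of_calculus_interior_strong[of S])
         (auto simp: has_real_derivative_iff_has_vector_derivative[symmetric]
           intro: continuous_on_subset)
    then have "((\<lambda>s. f' s - f' c) has_integral (f y - f x) - (y - x) * f' c) {x..y}"
      using has_integral_const_real[of "f' c" x y] \<open>x \<le> y\<close> by (intro has_integral_diff) auto
    moreover have "\<bar>f' s - f' c\<bar> \<le> G y - G x" if "s \<in> {x..y}" for s
      using assms(4) that \<open>c \<in> {x, y}\<close> \<open>x \<le> y\<close> by auto
    moreover have "0 \<le> G y - G x"
      using assms(4)[of x x y x] \<open>x \<le> y\<close> by simp
    ultimately have "norm ((f y - f x) - (y - x) * f' c)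
        \<le> (G y - G x) * Henstock_Kurzweil_Integration.content {x..y}"
      by (intro has_integral_bound_real[where S = "{}"]) auto
    then show ?thesis
      using \<open>x \<le> y\<close> by (simp add: mult.commute)
  qed
  show ?thesis
  proof (cases "b \<le> a")
    case True
    then show ?thesis
      using increment[of b a a] by (simp add: abs_minus_commute mult.commute)
  next
    case False
    then have "\<bar>f b - f a - (b - a) * f' a\<bar> \<le> (b - a) * (G b - G a)"
      by (intro increment) auto
    then show ?thesis
      by (simp add: abs_minus_commute algebra_simps)
  qed
qed

definition stein_solution :: "real \<Rightarrow> real \<Rightarrow> real" where
  "stein_solution z w = \<Phi> (min w z) * (1 - \<Phi> (max w z)) / std_normal_density w"

definition stein_solution_deriv :: "real \<Rightarrow> real \<Rightarrow> real" where
  "stein_solution_deriv z w = w * stein_solution z w + (if w \<le> z then 1 else 0) - \<Phi> z"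

text \<open>Up to a constant, \<open>stein_solution_deriv z w\<close> is the difference of the nondecreasing
  functions \<open>w * stein_solution z w\<close> and \<open>if z < w then 1 else 0\<close>, so their sum bounds
  its oscillation (\<open>stein_linear_remainder_le\<close>).\<close>

definition stein_majorant :: "real \<Rightarrow> real \<Rightarrow> real" where
  "stein_majorant z w = w * stein_solution z w + (if z < w then 1 else 0)"

lemma stein_solution_left: "w \<le> z \<Longrightarrow> stein_solution z w = (1 - \<Phi> z) * mills_ratio (- w)"
  by (simp add: stein_solution_def mills_ratio_minus)

lemma stein_solution_right: "z \<le> w \<Longrightarrow> stein_solution z w = \<Phi> z * mills_ratio w"
  by (simp add: stein_solution_def mills_ratio_def)

lemma stein_solution_nonneg: "0 \<le> stein_solution z w"
  using std_normal.cdf_nonneg std_normal.cdf_bounded_prob std_normal_density_pos[of w]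
  by (simp add: stein_solution_def)

lemma stein_solution_le: "stein_solution z w \<le> sqrt (2 * pi) / 4"
proof -
  have "\<Phi> (min w z) \<le> \<Phi> w" "1 - \<Phi> (max w z) \<le> 1 - \<Phi> w"
    by (simp_all add: std_normal.cdf_nondecreasing)
  then have "\<Phi> (min w z) * (1 - \<Phi> (max w z)) \<le> \<Phi> w * (1 - \<Phi> w)"
    using std_normal.cdf_nonneg[of w] std_normal.cdf_bounded_prob[of "max w z"]
    by (intro mult_mono) simp_all
  also have "\<dots> \<le> exp (- w\<^sup>2 / 2) / 4"
    by (rule std_normal_cdf_times_compl_le)
  also have "\<dots> = sqrt (2 * pi) / 4 * std_normal_density w"
    by (simp add: std_normal_density_def)
  finally show ?thesis
    using std_normal_density_pos[of w] by (simp add: stein_solution_def divide_le_eq)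
qed

lemma continuous_on_stein_solution: "continuous_on S (stein_solution z)"
  unfolding stein_solution_def
  by (intro continuous_intros) (simp_all add: not_sym[OF less_imp_neq[OF std_normal_density_pos]])

lemma has_real_derivative_stein_solution:
  assumes "w \<noteq> z"
  shows "(stein_solution z has_real_derivative stein_solution_deriv z w) (at w)"
proof (cases "w < z")
  case True
  have "((\<lambda>v. (1 - \<Phi> z) * mills_ratio (- v)) has_real_derivative stein_solution_deriv z w) (at w)"
    using True
    by (auto intro!: derivative_eq_intros
        simp: stein_solution_deriv_def stein_solution_left algebra_simps)
  then show ?thesis
    by (rule has_field_derivative_transform_within_open[where S = "{..<z}"])
       (use True in \<open>auto simp: stein_solution_left\<close>)
next
  case False
  with assms have "z < w"
    by simp
  have "((\<lambda>v. \<Phi> z * mills_ratio v) has_real_derivative stein_solution_deriv z w) (at w)"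
    using \<open>z < w\<close>
    by (auto intro!: derivative_eq_intros
        simp: stein_solution_deriv_def stein_solution_right algebra_simps)
  then show ?thesis
    by (rule has_field_derivative_transform_within_open[where S = "{z<..}"])
       (use \<open>z < w\<close> in \<open>auto simp: stein_solution_right\<close>)
qed

lemma mono_times_stein_solution: "mono (\<lambda>w. w * stein_solution z w)"
proof (rule monoI)
  have left: "x * stein_solution z x \<le> y * stein_solution z y" if "x \<le> y" "y \<le> z" for x y
  proof -
    have "x * mills_ratio (- x) \<le> y * mills_ratio (- y)"
      using monoD[OF mono_times_mills_ratio, of "- y" "- x"] that by simp
    then have "(1 - \<Phi> z) * (x * mills_ratio (- x)) \<le> (1 - \<Phi> z) * (y * mills_ratio (- y))"
      using std_normal.cdf_bounded_prob[of z] by (intro mult_left_mono) simp_all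
    then show ?thesis
      using that by (simp add: stein_solution_left mult.left_commute)
  qed
  have right: "x * stein_solution z x \<le> y * stein_solution z y" if "z \<le> x" "x \<le> y" for x y
  proof -
    have "\<Phi> z * (x * mills_ratio x) \<le> \<Phi> z * (y * mills_ratio y)"
      using monoD[OF mono_times_mills_ratio \<open>x \<le> y\<close>] std_normal.cdf_nonneg[of z]
      by (intro mult_left_mono) simp_all
    then show ?thesis
      using that by (simp add: stein_solution_right mult.left_commute)
  qed
  show "x * stein_solution z x \<le> y * stein_solution z y" if "x \<le> y" for x y
    using left[of x y] right[of x y] left[of x z] right[of z y] that
    by (cases "y \<le> z"; cases "z \<le> x") auto
qed

lemma times_stein_solution_bounds:
  "\<Phi> z - 1 \<le> w * stein_solution z w" "w * stein_solution z w \<le> \<Phi> z"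
proof -
  have lower: "\<Phi> z - 1 \<le> w * stein_solution z w" if "w \<le> z" for w
  proof -
    have "(1 - \<Phi> z) * (- 1) \<le> (1 - \<Phi> z) * (w * mills_ratio (- w))"
      using times_mills_ratio_le_1[of "- w"] std_normal.cdf_bounded_prob[of z]
      by (intro mult_left_mono) simp_all
    then show ?thesis
      using that by (simp add: stein_solution_left mult.left_commute)
  qed
  have upper: "w * stein_solution z w \<le> \<Phi> z" if "z \<le> w" for w
  proof -
    have "\<Phi> z * (w * mills_ratio w) \<le> \<Phi> z * 1"
      using times_mills_ratio_le_1[of w] std_normal.cdf_nonneg[of z]
      by (intro mult_left_mono) simp_all
    then show ?thesis
      using that by (simp add: stein_solution_right mult.left_commute)
  qed
  note mono = monoD[OF mono_times_stein_solution[of z]]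
  show "\<Phi> z - 1 \<le> w * stein_solution z w"
    using lower[of w] lower[of z] mono[of z w] by (cases "w \<le> z") auto
  show "w * stein_solution z w \<le> \<Phi> z"
    using upper[of w] upper[of z] mono[of w z] by (cases "z \<le> w") auto
qed

lemma abs_stein_solution_le: "\<bar>stein_solution z w\<bar> \<le> sqrt (2 * pi) / 4"
  using stein_solution_nonneg stein_solution_le by simp

lemma abs_times_stein_solution_le: "\<bar>w * stein_solution z w\<bar> \<le> 1"
  using times_stein_solution_bounds[where z = z and w = w]
    std_normal.cdf_nonneg[of z] std_normal.cdf_bounded_prob[of z]
  by (simp add: abs_le_iff)

lemma abs_stein_solution_diff_le: "\<bar>stein_solution z a - stein_solution z b\<bar> \<le> sqrt (2 * pi) / 4"
  using stein_solution_nonneg[of z a] stein_solution_nonneg[of z b]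
    stein_solution_le[of z a] stein_solution_le[of z b]
  by arith

lemma abs_stein_solution_deriv_le: "\<bar>stein_solution_deriv z w\<bar> \<le> 1"
  using times_stein_solution_bounds[where z = z and w = w] by (auto simp: stein_solution_deriv_def)

lemma abs_stein_majorant_le: "\<bar>stein_majorant z w - \<Phi> z\<bar> \<le> 1"
  using times_stein_solution_bounds[where z = z and w = w] by (auto simp: stein_majorant_def)

lemma stein_linear_remainder_le:
  "\<bar>(a - b) * stein_solution_deriv z a - (stein_solution z a - stein_solution z b)\<bar>
    \<le> (a - b) * (stein_majorant z a - stein_majorant z b)"
proof (rule abs_linear_remainder_le[where S = "{z}"])
  show "\<bar>stein_solution_deriv z s - stein_solution_deriv z t\<bar>
    \<le> stein_majorant z y - stein_majorant z x"
    if "x \<le> s" "s \<le> y" "x \<le> t" "t \<le> y" for x s t y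
  proof -
    let ?g = "\<lambda>w. w * stein_solution z w"
    have "?g x \<le> ?g s" "?g s \<le> ?g y" "?g x \<le> ?g t" "?g t \<le> ?g y"
      using that monoD[OF mono_times_stein_solution[of z]] by simp_all
    then have "\<bar>?g s - ?g t\<bar> \<le> ?g y - ?g x"
      by (simp add: abs_le_iff)
    moreover have "\<bar>(if z < s then 1 else 0) - (if z < t then 1 else 0)\<bar>
        \<le> (if z < y then 1 else 0) - (if z < x then 1 else (0::real))"
      using that by auto
    ultimately show ?thesis
      unfolding stein_solution_deriv_def stein_majorant_def by auto
  qed
qed (auto intro: continuous_on_stein_solution has_real_derivative_stein_solution)

lemma borel_measurable_stein_solution [measurable]: "stein_solution z \<in> borel_measurable borel"
  by (intro borel_measurable_continuous_onI continuous_on_stein_solution)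

lemma borel_measurable_stein_solution_deriv [measurable]:
  "stein_solution_deriv z \<in> borel_measurable borel"
  unfolding stein_solution_deriv_def[abs_def] by measurable

lemma borel_measurable_stein_majorant [measurable]: "stein_majorant z \<in> borel_measurable borel"
  unfolding stein_majorant_def[abs_def] by measurable

section \<open>Exchangeable pairs\<close>

lemma borel_measurable_vec_nth [measurable]: "(\<lambda>x::real^'n. x $ i) \<in> borel_measurable borel"
  by (intro borel_measurable_continuous_onI continuous_intros)

lemma borel_measurable_matrix_vector_mult [measurable]:
  "(\<lambda>x::real^'n. A *v x) \<in> borel_measurable borel"
  by (intro borel_measurable_continuous_onI matrix_vector_mult_linear_continuous_on)

lemma matrix_inv_left: "invertible A \<Longrightarrow> matrix_inv A ** A = mat 1"
  unfolding invertible_def matrix_inv_def by (rule someI2_ex) auto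

lemma inner_matrix_inv_row:
  fixes A :: "real^'n^'n"
  assumes "invertible A"
  shows "matrix_inv A $ i \<bullet> (A *v x) = x $ i"
  by (metis matrix_inv_left[OF assms] matrix_vector_mul_assoc matrix_vector_mul_component
      matrix_vector_mul_lid)

lemma subalgebra_sigma_rv:
  assumes "X \<in> borel_measurable M"
  shows "subalgebra M (sigma_rv M X)"
  unfolding subalgebra_def sigma_rv_def
proof
  show "space (vimage_algebra (space M) X borel) = space M"
    by simp
  have "X -` A \<inter> space M \<in> sets M" if "A \<in> sets borel" for A
    using measurable_sets[OF assms that] by simp
  then show "sets (vimage_algebra (space M) X borel) \<subseteq> sets M"
    by (auto simp: sets_vimage_algebra2)
qed

lemma measurable_sigma_rv: "X \<in> sigma_rv M X \<rightarrow>\<^sub>M borel"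
  unfolding sigma_rv_def by (rule measurable_vimage_algebra1) simp

lemma integrable_mult_bounded:
  fixes u v :: "'a \<Rightarrow> real"
  assumes "integrable M u" "v \<in> borel_measurable M" "\<And>x. x \<in> space M \<Longrightarrow> \<bar>v x\<bar> \<le> K"
  shows "integrable M (\<lambda>x. u x * v x)"
proof (rule Bochner_Integration.integrable_bound[where f = "\<lambda>x. K * u x"])
  show "integrable M (\<lambda>x. K * u x)"
    using assms(1) by simp
  show "(\<lambda>x. u x * v x) \<in> borel_measurable M"
    using assms(1,2) by measurable
  show "AE x in M. norm (u x * v x) \<le> norm (K * u x)"
  proof (rule AE_I2)
    fix x assume "x \<in> space M"
    then have "\<bar>v x\<bar> \<le> \<bar>K\<bar>"
      using assms(3) by fastforce
    then show "norm (u x * v x) \<le> norm (K * u x)"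
      by (simp add: abs_mult) (metis abs_ge_zero mult.commute mult_left_mono)
  qed
qed

lemma abs_integral_mult_bounded_le:
  fixes g a :: "'a \<Rightarrow> real"
  assumes "integrable M a" "g \<in> borel_measurable M" "\<And>x. x \<in> space M \<Longrightarrow> \<bar>g x\<bar> \<le> K"
  shows "\<bar>\<integral>x. g x * a x \<partial>M\<bar> \<le> K * (\<integral>x. \<bar>a x\<bar> \<partial>M)"
proof -
  have "integrable M (\<lambda>x. g x * a x)"
    using integrable_mult_bounded[OF assms] by (simp add: mult.commute)
  moreover have "\<bar>g x * a x\<bar> \<le> K * \<bar>a x\<bar>" if "x \<in> space M" for x
    using assms(3)[OF that] by (simp add: abs_mult mult_right_mono)
  ultimately have "(\<integral>x. \<bar>g x * a x\<bar> \<partial>M) \<le> (\<integral>x. K * \<bar>a x\<bar> \<partial>M)"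
    using assms(1) by (intro integral_mono) auto
  then show ?thesis
    by (intro order_trans[OF integral_abs_bound]) simp
qed

lemma (in sigma_finite_subalgebra) real_cond_exp_intg_bounded:
  fixes g h :: "'a \<Rightarrow> real"
  assumes "integrable M h" "g \<in> borel_measurable F" "\<And>x. x \<in> space M \<Longrightarrow> \<bar>g x\<bar> \<le> K"
  shows "integrable M (\<lambda>x. g x * real_cond_exp M F h x)"
    "(\<integral>x. g x * real_cond_exp M F h x \<partial>M) = (\<integral>x. g x * h x \<partial>M)"
proof -
  have "g \<in> borel_measurable M"
    by (rule measurable_from_subalg[OF subalg assms(2)])
  then have "integrable M (\<lambda>x. h x * g x)"
    by (rule integrable_mult_bounded[OF assms(1) _ assms(3)])
  then have "integrable M (\<lambda>x. g x * h x)"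
    by (simp only: mult.commute)
  moreover have "h \<in> borel_measurable M"
    using assms(1) by (rule borel_measurable_integrable)
  ultimately show "integrable M (\<lambda>x. g x * real_cond_exp M F h x)"
    "(\<integral>x. g x * real_cond_exp M F h x \<partial>M) = (\<integral>x. g x * h x \<partial>M)"
    using real_cond_exp_intg assms(2) by blast+
qed

lemma integral_exchangeable_swap:
  fixes X X' :: "'a \<Rightarrow> 'b::second_countable_topology" and u :: "'b \<times> 'b \<Rightarrow> real"
  assumes [measurable]: "X \<in> borel_measurable M" "X' \<in> borel_measurable M"
    and exch: "distr M borel (\<lambda>\<omega>. (X \<omega>, X' \<omega>)) = distr M borel (\<lambda>\<omega>. (X' \<omega>, X \<omega>))"
    and [measurable]: "u \<in> borel_measurable (borel \<Otimes>\<^sub>M borel)"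
  shows "(\<integral>\<omega>. u (X \<omega>, X' \<omega>) \<partial>M) = (\<integral>\<omega>. u (X' \<omega>, X \<omega>) \<partial>M)"
proof -
  have distr_swap: "distr M (borel \<Otimes>\<^sub>M borel) (\<lambda>\<omega>. (X \<omega>, X' \<omega>))
      = distr M (borel \<Otimes>\<^sub>M borel) (\<lambda>\<omega>. (X' \<omega>, X \<omega>))"
    using exch by (simp add: borel_prod)
  have "(\<integral>\<omega>. u (X \<omega>, X' \<omega>) \<partial>M) = (\<integral>p. u p \<partial>distr M (borel \<Otimes>\<^sub>M borel) (\<lambda>\<omega>. (X \<omega>, X' \<omega>)))"
    by (rule integral_distr[where g = "\<lambda>\<omega>. (X \<omega>, X' \<omega>)" and f = u, symmetric]) measurable
  also have "\<dots> = (\<integral>\<omega>. u (X' \<omega>, X \<omega>) \<partial>M)"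
    unfolding distr_swap by (rule integral_distr[where g = "\<lambda>\<omega>. (X' \<omega>, X \<omega>)" and f = u]) measurable
  finally show ?thesis .
qed

lemma integral_exchangeable_antisym:
  fixes X X' :: "'a \<Rightarrow> 'b::second_countable_topology" and k :: "'b \<times> 'b \<Rightarrow> real"
  assumes "X \<in> borel_measurable M" "X' \<in> borel_measurable M"
    and "distr M borel (\<lambda>\<omega>. (X \<omega>, X' \<omega>)) = distr M borel (\<lambda>\<omega>. (X' \<omega>, X \<omega>))"
    and [measurable]: "k \<in> borel_measurable (borel \<Otimes>\<^sub>M borel)" "\<phi> \<in> borel_measurable borel"
    and antisym: "\<And>x y. k (y, x) = - k (x, y)"
  shows "(\<integral>\<omega>. k (X \<omega>, X' \<omega>) * \<phi> (X' \<omega>) \<partial>M) = - (\<integral>\<omega>. k (X \<omega>, X' \<omega>) * \<phi> (X \<omega>) \<partial>M)"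
proof -
  have "k (X' \<omega>, X \<omega>) * \<phi> (X \<omega>) = - (k (X \<omega>, X' \<omega>) * \<phi> (X \<omega>))" for \<omega>
    using antisym[of "X \<omega>" "X' \<omega>"] by simp
  then show ?thesis
    using integral_exchangeable_swap[OF assms(1-3), of "\<lambda>(x, y). k (x, y) * \<phi> y"] by simp
qed

lemma (in prob_space) stein_identity:
  assumes [measurable]: "W \<in> borel_measurable M"
  shows "prob {\<omega> \<in> space M. W \<omega> \<le> z} - \<Phi> z
    = (\<integral>\<omega>. stein_solution_deriv z (W \<omega>) - W \<omega> * stein_solution z (W \<omega>) \<partial>M)"
proof -
  have "(\<integral>\<omega>. stein_solution_deriv z (W \<omega>) - W \<omega> * stein_solution z (W \<omega>) \<partial>M)
      = (\<integral>\<omega>. indicator {\<omega> \<in> space M. W \<omega> \<le> z} \<omega> - \<Phi> z \<partial>M)"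
    by (rule Bochner_Integration.integral_cong) (auto simp: stein_solution_deriv_def)
  also have "\<dots> = prob {\<omega> \<in> space M. W \<omega> \<le> z} - \<Phi> z"
  proof -
    have "{\<omega> \<in> space M. W \<omega> \<le> z} \<in> sets M"
      by measurable
    then have "integrable M (indicator {\<omega> \<in> space M. W \<omega> \<le> z} :: 'a \<Rightarrow> real)"
      by (simp add: less_top[symmetric])
    then show ?thesis
      by (subst Bochner_Integration.integral_diff) (auto simp: prob_space)
  qed
  finally show ?thesis
    by simp
qed

section \<open>Exchangeable pairs with a linear regression property\<close>

locale linear_regression_pair = prob_space M for M :: "'a measure" +
  fixes X X' R :: "'a \<Rightarrow> real^'d"
    and \<Lambda> :: "real^'d^'d" and lam :: real and i :: 'd and ell :: "real^'d"
  assumes X_measurable [measurable]: "X \<in> borel_measurable M"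
    and X'_measurable [measurable]: "X' \<in> borel_measurable M"
    and R_measurable [measurable]: "R \<in> borel_measurable M"
    and exchangeable: "distr M borel (\<lambda>\<omega>. (X \<omega>, X' \<omega>)) = distr M borel (\<lambda>\<omega>. (X' \<omega>, X \<omega>))"
    and lam_pos: "0 < lam"
    and ell_row: "\<And>x. ell \<bullet> (\<Lambda> *v x) = x $ i" \<comment> \<open>\<open>ell\<close> is the \<open>i\<close>-th row of \<open>\<Lambda>\<^sup>-\<^sup>1\<close>\<close>
    and D_integrable: "\<And>j. integrable M (\<lambda>\<omega>. (X \<omega> - X' \<omega>) $ j)"
    and D_mult_D_integrable: "\<And>j. integrable M (\<lambda>\<omega>. (X \<omega> - X' \<omega>) $ j * (X \<omega> - X' \<omega>) $ i)"
    and regression: "\<And>j. AE \<omega> in M. real_cond_exp M (sigma_rv M X) (\<lambda>\<omega>. (X \<omega> - X' \<omega>) $ j) \<omega>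
      = lam * (\<Lambda> *v X \<omega>) $ j + lam * R \<omega> $ j"
    and ell_R_integrable: "integrable M (\<lambda>\<omega>. ell \<bullet> R \<omega>)"
begin

abbreviation D :: "'a \<Rightarrow> real^'d" where
  "D \<omega> \<equiv> X \<omega> - X' \<omega>"

abbreviation W :: "'a \<Rightarrow> real" where
  "W \<omega> \<equiv> X \<omega> $ i"

abbreviation W' :: "'a \<Rightarrow> real" where
  "W' \<omega> \<equiv> X' \<omega> $ i"

abbreviation cond_inner_D_mult_D :: "'a \<Rightarrow> real" where
  "cond_inner_D_mult_D \<equiv> real_cond_exp M (sigma_rv M X) (\<lambda>\<omega>. ell \<bullet> D \<omega> * D \<omega> $ i)"

abbreviation cond_abs_inner_D_mult_D :: "'a \<Rightarrow> real" where
  "cond_abs_inner_D_mult_D \<equiv> real_cond_exp M (sigma_rv M X) (\<lambda>\<omega>. \<bar>ell \<bullet> D \<omega>\<bar> * D \<omega> $ i)"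

sublocale cond: finite_measure_subalgebra M "sigma_rv M X"
  by (intro finite_measure_subalgebra.intro finite_measure_subalgebra_axioms.intro
      subalgebra_sigma_rv X_measurable) (simp add: finite_measure_axioms)

lemma X_measurable_sigma_rv [measurable]: "X \<in> sigma_rv M X \<rightarrow>\<^sub>M borel"
  by (rule measurable_sigma_rv)

lemma integrable_inner_D: "integrable M (\<lambda>\<omega>. ell \<bullet> D \<omega>)"
proof -
  have "integrable M (\<lambda>\<omega>. \<Sum>j\<in>UNIV. ell $ j * D \<omega> $ j)"
    using D_integrable by (intro Bochner_Integration.integrable_sum integrable_mult_right)
  then show ?thesis
    by (simp add: inner_vec_def)
qed

lemma integrable_inner_D_mult_D: "integrable M (\<lambda>\<omega>. ell \<bullet> D \<omega> * D \<omega> $ i)"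
proof -
  have "integrable M (\<lambda>\<omega>. \<Sum>j\<in>UNIV. ell $ j * (D \<omega> $ j * D \<omega> $ i))"
    using D_mult_D_integrable by (intro Bochner_Integration.integrable_sum integrable_mult_right)
  then show ?thesis
    by (simp add: inner_vec_def sum_distrib_right mult.assoc)
qed

lemma integrable_abs_inner_D_mult_D: "integrable M (\<lambda>\<omega>. \<bar>ell \<bullet> D \<omega>\<bar> * D \<omega> $ i)"
  by (rule Bochner_Integration.integrable_bound[OF integrable_inner_D_mult_D]) (auto simp: abs_mult)

lemma integral_mult_D_component:
  assumes [measurable]: "g \<in> borel_measurable (sigma_rv M X)"
    and bounded: "\<And>\<omega>. \<omega> \<in> space M \<Longrightarrow> \<bar>g \<omega>\<bar> \<le> K"
  shows "integrable M (\<lambda>\<omega>. g \<omega> * (lam * (\<Lambda> *v X \<omega>) $ j + lam * R \<omega> $ j))"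
    and "(\<integral>\<omega>. g \<omega> * D \<omega> $ j \<partial>M) = (\<integral>\<omega>. g \<omega> * (lam * (\<Lambda> *v X \<omega>) $ j + lam * R \<omega> $ j) \<partial>M)"
proof -
  have [measurable]: "g \<in> borel_measurable M"
    by (rule measurable_from_subalg[OF cond.subalg assms(1)])
  have ae: "AE \<omega> in M. g \<omega> * real_cond_exp M (sigma_rv M X) (\<lambda>\<omega>. D \<omega> $ j) \<omega>
      = g \<omega> * (lam * (\<Lambda> *v X \<omega>) $ j + lam * R \<omega> $ j)"
    using regression[of j] by eventually_elim simp
  note cond_exp = cond.real_cond_exp_intg_bounded[OF D_integrable assms]
  show "integrable M (\<lambda>\<omega>. g \<omega> * (lam * (\<Lambda> *v X \<omega>) $ j + lam * R \<omega> $ j))"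
    using cond_exp(1) by (rule integrable_cong_AE_imp) (use ae in auto)
  show "(\<integral>\<omega>. g \<omega> * D \<omega> $ j \<partial>M)
      = (\<integral>\<omega>. g \<omega> * (lam * (\<Lambda> *v X \<omega>) $ j + lam * R \<omega> $ j) \<partial>M)"
    using cond_exp(2)[symmetric] integral_cong_AE[OF _ _ ae] by simp
qed

lemma integral_inner_D_mult:
  assumes [measurable]: "g \<in> borel_measurable (sigma_rv M X)"
    and bounded: "\<And>\<omega>. \<omega> \<in> space M \<Longrightarrow> \<bar>g \<omega>\<bar> \<le> K"
  shows "integrable M (\<lambda>\<omega>. g \<omega> * (W \<omega> + ell \<bullet> R \<omega>))"
    and "(\<integral>\<omega>. g \<omega> * (ell \<bullet> D \<omega>) \<partial>M) = lam * (\<integral>\<omega>. g \<omega> * (W \<omega> + ell \<bullet> R \<omega>) \<partial>M)"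
proof -
  define Y where "Y j \<omega> = lam * (\<Lambda> *v X \<omega>) $ j + lam * R \<omega> $ j" for j \<omega>
  have [measurable]: "g \<in> borel_measurable M"
    by (rule measurable_from_subalg[OF cond.subalg assms(1)])
  note component = integral_mult_D_component[OF assms, folded Y_def]
  have D_int: "integrable M (\<lambda>\<omega>. g \<omega> * D \<omega> $ j)" for j
    using integrable_mult_bounded[OF D_integrable _ bounded] by (simp add: mult.commute)
  have row: "(\<Sum>j\<in>UNIV. ell $ j * (g \<omega> * Y j \<omega>)) = lam * (g \<omega> * (W \<omega> + ell \<bullet> R \<omega>))" for \<omega>
  proof -
    have "(\<Sum>j\<in>UNIV. ell $ j * (g \<omega> * Y j \<omega>)) = g \<omega> * lam * (ell \<bullet> (\<Lambda> *v X \<omega>) + ell \<bullet> R \<omega>)"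
      by (simp add: Y_def inner_vec_def sum_distrib_left sum.distrib algebra_simps)
    then show ?thesis
      by (simp add: ell_row algebra_simps)
  qed
  have "integrable M (\<lambda>\<omega>. \<Sum>j\<in>UNIV. ell $ j * (g \<omega> * Y j \<omega>))"
    using component(1) by (intro Bochner_Integration.integrable_sum integrable_mult_right)
  then show "integrable M (\<lambda>\<omega>. g \<omega> * (W \<omega> + ell \<bullet> R \<omega>))"
    using lam_pos by (simp add: row)
  have "(\<integral>\<omega>. g \<omega> * (ell \<bullet> D \<omega>) \<partial>M) = (\<integral>\<omega>. (\<Sum>j\<in>UNIV. ell $ j * (g \<omega> * D \<omega> $ j)) \<partial>M)"
    by (simp add: inner_vec_def sum_distrib_left mult_ac)
  also have "\<dots> = (\<Sum>j\<in>UNIV. ell $ j * (\<integral>\<omega>. g \<omega> * D \<omega> $ j \<partial>M))"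
    using D_int by (subst Bochner_Integration.integral_sum) auto
  also have "\<dots> = (\<Sum>j\<in>UNIV. ell $ j * (\<integral>\<omega>. g \<omega> * Y j \<omega> \<partial>M))"
    by (simp only: component(2))
  also have "\<dots> = (\<integral>\<omega>. (\<Sum>j\<in>UNIV. ell $ j * (g \<omega> * Y j \<omega>)) \<partial>M)"
    using component(1) by simp
  also have "\<dots> = lam * (\<integral>\<omega>. g \<omega> * (W \<omega> + ell \<bullet> R \<omega>) \<partial>M)"
    by (simp add: row)
  finally show "(\<integral>\<omega>. g \<omega> * (ell \<bullet> D \<omega>) \<partial>M) = lam * (\<integral>\<omega>. g \<omega> * (W \<omega> + ell \<bullet> R \<omega>) \<partial>M)" .
qed

lemma integral_inner_D_stein_increment:
  "(\<integral>\<omega>. ell \<bullet> D \<omega> * (stein_solution z (W \<omega>) - stein_solution z (W' \<omega>)) \<partial>M) / (2 * lam)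
    = (\<integral>\<omega>. W \<omega> * stein_solution z (W \<omega>) \<partial>M) + (\<integral>\<omega>. ell \<bullet> R \<omega> * stein_solution z (W \<omega>) \<partial>M)"
proof -
  let ?f = "\<lambda>x. stein_solution z (x $ i)"
  have int_f: "integrable M (\<lambda>\<omega>. ell \<bullet> D \<omega> * ?f (X \<omega>))"
    by (rule integrable_mult_bounded[OF integrable_inner_D _ abs_stein_solution_le]) measurable
  have int_f': "integrable M (\<lambda>\<omega>. ell \<bullet> D \<omega> * ?f (X' \<omega>))"
    by (rule integrable_mult_bounded[OF integrable_inner_D _ abs_stein_solution_le]) measurable
  have int_Wf: "integrable M (\<lambda>\<omega>. W \<omega> * ?f (X \<omega>))"
    by (rule integrable_const_bound[where B = 1])
       (simp add: abs_times_stein_solution_le, measurable)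
  have int_Rf: "integrable M (\<lambda>\<omega>. ell \<bullet> R \<omega> * ?f (X \<omega>))"
    by (rule integrable_mult_bounded[OF ell_R_integrable _ abs_stein_solution_le]) measurable
  have "(\<integral>\<omega>. ell \<bullet> D \<omega> * ?f (X' \<omega>) \<partial>M) = - (\<integral>\<omega>. ell \<bullet> D \<omega> * ?f (X \<omega>) \<partial>M)"
    using integral_exchangeable_antisym[OF X_measurable X'_measurable exchangeable,
        of "\<lambda>(x, y). ell \<bullet> (x - y)" ?f]
    by (simp add: inner_diff_right)
  then have "(\<integral>\<omega>. ell \<bullet> D \<omega> * (?f (X \<omega>) - ?f (X' \<omega>)) \<partial>M) = 2 * (\<integral>\<omega>. ?f (X \<omega>) * (ell \<bullet> D \<omega>) \<partial>M)"
    using int_f int_f' by (simp add: right_diff_distrib mult.commute)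
  also have "\<dots> = 2 * lam * (\<integral>\<omega>. ?f (X \<omega>) * (W \<omega> + ell \<bullet> R \<omega>) \<partial>M)"
    using integral_inner_D_mult(2)[of "\<lambda>\<omega>. ?f (X \<omega>)" "sqrt (2 * pi) / 4"] abs_stein_solution_le
    by simp
  also have "\<dots> = 2 * lam * ((\<integral>\<omega>. W \<omega> * ?f (X \<omega>) \<partial>M) + (\<integral>\<omega>. ell \<bullet> R \<omega> * ?f (X \<omega>) \<partial>M))"
    using int_Wf int_Rf by (simp add: distrib_left mult.commute)
  finally show ?thesis
    using lam_pos by simp
qed

lemma stein_decomposition:
  "prob {\<omega> \<in> space M. W \<omega> \<le> z} - \<Phi> z =
      (\<integral>\<omega>. stein_solution_deriv z (W \<omega>) * (1 - cond_inner_D_mult_D \<omega> / (2 * lam)) \<partial>M)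
    + (\<integral>\<omega>. ell \<bullet> D \<omega> * (D \<omega> $ i * stein_solution_deriv z (W \<omega>)
          - (stein_solution z (W \<omega>) - stein_solution z (W' \<omega>))) \<partial>M) / (2 * lam)
    + (\<integral>\<omega>. ell \<bullet> R \<omega> * stein_solution z (W \<omega>) \<partial>M)"
proof -
  let ?g = "\<lambda>\<omega>. stein_solution_deriv z (W \<omega>)"
  let ?f = "\<lambda>\<omega>. stein_solution z (W \<omega>)"
  let ?f' = "\<lambda>\<omega>. stein_solution z (W' \<omega>)"
  let ?LDD = "\<lambda>\<omega>. ell \<bullet> D \<omega> * D \<omega> $ i"
  have g_meas: "?g \<in> borel_measurable (sigma_rv M X)"
    by measurable
  note cond_exp =
    cond.real_cond_exp_intg_bounded[OF integrable_inner_D_mult_D g_meas abs_stein_solution_deriv_le]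
  have int_g: "integrable M ?g"
    by (rule integrable_const_bound[where B = 1])
       (simp add: abs_stein_solution_deriv_le, measurable)
  have int_Wf: "integrable M (\<lambda>\<omega>. W \<omega> * ?f \<omega>)"
    by (rule integrable_const_bound[where B = 1])
       (simp add: abs_times_stein_solution_le, measurable)
  have int_gLDD: "integrable M (\<lambda>\<omega>. ?g \<omega> * ?LDD \<omega>)"
    using integrable_mult_bounded[OF integrable_inner_D_mult_D _ abs_stein_solution_deriv_le]
    by (simp add: mult.commute)
  have int_ff': "integrable M (\<lambda>\<omega>. ell \<bullet> D \<omega> * (?f \<omega> - ?f' \<omega>))"
    by (rule integrable_mult_bounded[OF integrable_inner_D _ abs_stein_solution_diff_le]) measurable
  have "(\<integral>\<omega>. ?g \<omega> * (1 - cond_inner_D_mult_D \<omega> / (2 * lam)) \<partial>M)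
      = (\<integral>\<omega>. ?g \<omega> \<partial>M) - (\<integral>\<omega>. ?g \<omega> * ?LDD \<omega> \<partial>M) / (2 * lam)"
    using cond_exp int_g by (simp add: right_diff_distrib)
  moreover have "(\<integral>\<omega>. ell \<bullet> D \<omega> * (D \<omega> $ i * ?g \<omega> - (?f \<omega> - ?f' \<omega>)) \<partial>M)
      = (\<integral>\<omega>. ?g \<omega> * ?LDD \<omega> \<partial>M) - (\<integral>\<omega>. ell \<bullet> D \<omega> * (?f \<omega> - ?f' \<omega>) \<partial>M)"
    using int_gLDD int_ff' by (simp add: right_diff_distrib mult_ac)
  moreover have "prob {\<omega> \<in> space M. W \<omega> \<le> z} - \<Phi> z = (\<integral>\<omega>. ?g \<omega> \<partial>M) - (\<integral>\<omega>. W \<omega> * ?f \<omega> \<partial>M)"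
    using stein_identity[of W z] int_g int_Wf by simp
  ultimately show ?thesis
    using integral_inner_D_stein_increment[of z] lam_pos by (simp add: diff_divide_distrib)
qed

lemma integral_abs_inner_D_mult_D_swap:
  assumes "\<phi> \<in> borel_measurable borel"
  shows "(\<integral>\<omega>. \<bar>ell \<bullet> D \<omega>\<bar> * D \<omega> $ i * \<phi> (X' \<omega>) \<partial>M)
    = - (\<integral>\<omega>. \<bar>ell \<bullet> D \<omega>\<bar> * D \<omega> $ i * \<phi> (X \<omega>) \<partial>M)"
proof -
  let ?k = "\<lambda>(x, y). \<bar>ell \<bullet> (x - y)\<bar> * (x - y) $ i"
  have k_antisym: "?k (y, x) = - ?k (x, y)" for x y :: "real^'d"
  proof -
    have "\<bar>ell \<bullet> (y - x)\<bar> = \<bar>ell \<bullet> (x - y)\<bar>"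
      by (metis abs_minus_commute inner_diff_right)
    then show ?thesis
      by (simp add: right_diff_distrib)
  qed
  have "?k \<in> borel_measurable (borel \<Otimes>\<^sub>M borel)"
    by measurable
  from integral_exchangeable_antisym[OF X_measurable X'_measurable exchangeable this assms
      k_antisym]
  show ?thesis
    by simp
qed

lemma integral_abs_inner_D_mult_D_eq_0: "(\<integral>\<omega>. \<bar>ell \<bullet> D \<omega>\<bar> * D \<omega> $ i \<partial>M) = 0"
  using integral_abs_inner_D_mult_D_swap[of "\<lambda>_. 1"] by simp

lemma integral_abs_inner_D_mult_D_majorant_increment:
  "(\<integral>\<omega>. \<bar>ell \<bullet> D \<omega>\<bar> * D \<omega> $ i * (stein_majorant z (W \<omega>) - stein_majorant z (W' \<omega>)) \<partial>M)
    = 2 * (\<integral>\<omega>. (stein_majorant z (W \<omega>) - \<Phi> z) * cond_abs_inner_D_mult_D \<omega> \<partial>M)"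
proof -
  let ?G = "\<lambda>x. stein_majorant z (x $ i)"
  let ?aLDD = "\<lambda>\<omega>. \<bar>ell \<bullet> D \<omega>\<bar> * D \<omega> $ i"
  have G_bound: "\<bar>?G x\<bar> \<le> 2" for x
    using abs_stein_majorant_le[of z "x $ i"]
      std_normal.cdf_nonneg[of z] std_normal.cdf_bounded_prob[of z]
    by (simp add: abs_le_iff)
  have int_G: "integrable M (\<lambda>\<omega>. ?aLDD \<omega> * ?G (X \<omega>))"
    by (rule integrable_mult_bounded[OF integrable_abs_inner_D_mult_D _ G_bound]) measurable
  have int_G': "integrable M (\<lambda>\<omega>. ?aLDD \<omega> * ?G (X' \<omega>))"
    by (rule integrable_mult_bounded[OF integrable_abs_inner_D_mult_D _ G_bound]) measurable
  have "?G \<in> borel_measurable borel"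
    by measurable
  note swap = integral_abs_inner_D_mult_D_swap[OF this]
  have G_meas: "(\<lambda>\<omega>. ?G (X \<omega>) - \<Phi> z) \<in> borel_measurable (sigma_rv M X)"
    by measurable
  note cond_exp =
    cond.real_cond_exp_intg_bounded[OF integrable_abs_inner_D_mult_D G_meas abs_stein_majorant_le]
  have "(\<integral>\<omega>. ?aLDD \<omega> * (?G (X \<omega>) - ?G (X' \<omega>)) \<partial>M) = 2 * (\<integral>\<omega>. ?aLDD \<omega> * ?G (X \<omega>) \<partial>M)"
    using int_G int_G' swap by (simp add: right_diff_distrib)
  also have "\<dots> = 2 * ((\<integral>\<omega>. ?aLDD \<omega> * ?G (X \<omega>) \<partial>M) - \<Phi> z * (\<integral>\<omega>. ?aLDD \<omega> \<partial>M))"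
    using integral_abs_inner_D_mult_D_eq_0 by simp
  also have "\<dots> = 2 * (\<integral>\<omega>. (?G (X \<omega>) - \<Phi> z) * ?aLDD \<omega> \<partial>M)"
  proof -
    have "(\<lambda>\<omega>. (?G (X \<omega>) - \<Phi> z) * ?aLDD \<omega>) = (\<lambda>\<omega>. ?aLDD \<omega> * ?G (X \<omega>) - \<Phi> z * ?aLDD \<omega>)"
      by (simp add: fun_eq_iff algebra_simps)
    then show ?thesis
      using Bochner_Integration.integral_diff[OF int_G
          integrable_mult_right[OF integrable_abs_inner_D_mult_D]]
      by simp
  qed
  also have "\<dots> = 2 * (\<integral>\<omega>. (?G (X \<omega>) - \<Phi> z) * cond_abs_inner_D_mult_D \<omega> \<partial>M)"
    using cond_exp(2) by simp
  finally show ?thesis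
    by (simp add: mult.assoc)
qed

lemma abs_stein_remainder_le:
  "\<bar>ell \<bullet> D \<omega> * (D \<omega> $ i * stein_solution_deriv z (W \<omega>)
      - (stein_solution z (W \<omega>) - stein_solution z (W' \<omega>)))\<bar>
    \<le> \<bar>ell \<bullet> D \<omega>\<bar> * D \<omega> $ i * (stein_majorant z (W \<omega>) - stein_majorant z (W' \<omega>))"
proof -
  have "\<bar>(W \<omega> - W' \<omega>) * stein_solution_deriv z (W \<omega>)
        - (stein_solution z (W \<omega>) - stein_solution z (W' \<omega>))\<bar>
      \<le> (W \<omega> - W' \<omega>) * (stein_majorant z (W \<omega>) - stein_majorant z (W' \<omega>))"
    by (rule stein_linear_remainder_le)
  then show ?thesis
    by (simp add: abs_mult mult.assoc mult_left_mono)
qed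

lemma stein_remainder_bound:
  "\<bar>\<integral>\<omega>. ell \<bullet> D \<omega> * (D \<omega> $ i * stein_solution_deriv z (W \<omega>)
        - (stein_solution z (W \<omega>) - stein_solution z (W' \<omega>))) \<partial>M\<bar>
    \<le> 2 * (\<integral>\<omega>. \<bar>cond_abs_inner_D_mult_D \<omega>\<bar> \<partial>M)"
proof -
  let ?r = "\<lambda>\<omega>. ell \<bullet> D \<omega> * (D \<omega> $ i * stein_solution_deriv z (W \<omega>)
        - (stein_solution z (W \<omega>) - stein_solution z (W' \<omega>)))"
  let ?m = "\<lambda>\<omega>. \<bar>ell \<bullet> D \<omega>\<bar> * D \<omega> $ i * (stein_majorant z (W \<omega>) - stein_majorant z (W' \<omega>))"
  have pointwise: "\<bar>?r \<omega>\<bar> \<le> ?m \<omega>" for \<omega>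
    by (rule abs_stein_remainder_le)
  have int_m: "integrable M ?m"
  proof (rule integrable_mult_bounded[OF integrable_abs_inner_D_mult_D])
    show "\<bar>stein_majorant z (W \<omega>) - stein_majorant z (W' \<omega>)\<bar> \<le> 2" for \<omega>
      using abs_stein_majorant_le[of z "W \<omega>"] abs_stein_majorant_le[of z "W' \<omega>"] by linarith
  qed measurable
  have int_r: "integrable M ?r"
  proof (rule Bochner_Integration.integrable_bound[OF int_m])
    show "?r \<in> borel_measurable M"
      by measurable
    have "\<bar>?r \<omega>\<bar> \<le> \<bar>?m \<omega>\<bar>" for \<omega>
      by (rule order_trans[OF pointwise abs_ge_self])
    then show "AE \<omega> in M. norm (?r \<omega>) \<le> norm (?m \<omega>)"
      by simp
  qed
  have "\<bar>\<integral>\<omega>. ?r \<omega> \<partial>M\<bar> \<le> (\<integral>\<omega>. \<bar>?r \<omega>\<bar> \<partial>M)"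
    by (rule integral_abs_bound)
  also have "\<dots> \<le> (\<integral>\<omega>. ?m \<omega> \<partial>M)"
    using int_r int_m pointwise by (intro integral_mono) auto
  also have "\<dots> = 2 * (\<integral>\<omega>. (stein_majorant z (W \<omega>) - \<Phi> z) * cond_abs_inner_D_mult_D \<omega> \<partial>M)"
    by (rule integral_abs_inner_D_mult_D_majorant_increment)
  also have "\<dots> \<le> 2 * (\<integral>\<omega>. \<bar>cond_abs_inner_D_mult_D \<omega>\<bar> \<partial>M)"
  proof -
    have "(\<lambda>\<omega>. stein_majorant z (W \<omega>) - \<Phi> z) \<in> borel_measurable M"
      by measurable
    from abs_integral_mult_bounded_le[OF cond.real_cond_exp_int(1)[OF integrable_abs_inner_D_mult_D]
        this abs_stein_majorant_le]
    show ?thesis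
      by (simp add: abs_le_iff)
  qed
  finally show ?thesis .
qed

lemma cdf_error_bound:
  "\<bar>prob {\<omega> \<in> space M. W \<omega> \<le> z} - \<Phi> z\<bar>
    \<le> (\<integral>\<omega>. \<bar>1 - cond_inner_D_mult_D \<omega> / (2 * lam)\<bar> \<partial>M)
      + 1 / lam * (\<integral>\<omega>. \<bar>cond_abs_inner_D_mult_D \<omega>\<bar> \<partial>M)
      + sqrt (2 * pi) / 4 * (\<integral>\<omega>. \<bar>ell \<bullet> R \<omega>\<bar> \<partial>M)"
proof -
  let ?a = "\<lambda>\<omega>. 1 - cond_inner_D_mult_D \<omega> / (2 * lam)"
  let ?T1 = "\<integral>\<omega>. stein_solution_deriv z (W \<omega>) * ?a \<omega> \<partial>M"
  let ?T2 = "\<integral>\<omega>. ell \<bullet> D \<omega> * (D \<omega> $ i * stein_solution_deriv z (W \<omega>)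
      - (stein_solution z (W \<omega>) - stein_solution z (W' \<omega>))) \<partial>M"
  let ?T3 = "\<integral>\<omega>. ell \<bullet> R \<omega> * stein_solution z (W \<omega>) \<partial>M"
  have int_a: "integrable M ?a"
    using cond.real_cond_exp_int(1)[OF integrable_inner_D_mult_D] by simp
  have "\<bar>?T1\<bar> \<le> 1 * (\<integral>\<omega>. \<bar>?a \<omega>\<bar> \<partial>M)"
    by (rule abs_integral_mult_bounded_le[OF int_a _ abs_stein_solution_deriv_le]) measurable
  moreover have "\<bar>?T3\<bar> \<le> sqrt (2 * pi) / 4 * (\<integral>\<omega>. \<bar>ell \<bullet> R \<omega>\<bar> \<partial>M)"
  proof -
    have "(\<lambda>\<omega>. stein_solution z (W \<omega>)) \<in> borel_measurable M"
      by measurable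
    from abs_integral_mult_bounded_le[OF ell_R_integrable this abs_stein_solution_le] show ?thesis
      by (simp add: mult.commute)
  qed
  moreover have "\<bar>?T2\<bar> / (2 * lam) \<le> 1 / lam * (\<integral>\<omega>. \<bar>cond_abs_inner_D_mult_D \<omega>\<bar> \<partial>M)"
    using divide_right_mono[OF stein_remainder_bound[of z], of "2 * lam"] lam_pos by simp
  moreover have "\<bar>?T1 + ?T2 / (2 * lam) + ?T3\<bar> \<le> \<bar>?T1\<bar> + \<bar>?T2\<bar> / (2 * lam) + \<bar>?T3\<bar>"
    using lam_pos abs_triangle_ineq[of "?T1 + ?T2 / (2 * lam)" ?T3]
      abs_triangle_ineq[of ?T1 "?T2 / (2 * lam)"]
    by (simp add: abs_divide)
  ultimately show ?thesis
    unfolding stein_decomposition[of z] by linarith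
qed

lemma kolmogorov_dist_le:
  "kolmogorov_dist (distr M borel W) std_normal_distribution
    \<le> (\<integral>\<omega>. \<bar>1 - cond_inner_D_mult_D \<omega> / (2 * lam)\<bar> \<partial>M)
      + 1 / lam * (\<integral>\<omega>. \<bar>cond_abs_inner_D_mult_D \<omega>\<bar> \<partial>M)
      + sqrt (2 * pi) / 4 * (\<integral>\<omega>. \<bar>ell \<bullet> R \<omega>\<bar> \<partial>M)"
  unfolding kolmogorov_dist_def
proof (rule cSUP_least)
  fix z
  have "measure (distr M borel W) {..z} = prob {\<omega> \<in> space M. W \<omega> \<le> z}"
    by (subst measure_distr) (auto simp: vimage_def Int_def conj_commute)
  then show "\<bar>measure (distr M borel W) {..z} - measure std_normal_distribution {..z}\<bar>
    \<le> (\<integral>\<omega>. \<bar>1 - cond_inner_D_mult_D \<omega> / (2 * lam)\<bar> \<partial>M)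
      + 1 / lam * (\<integral>\<omega>. \<bar>cond_abs_inner_D_mult_D \<omega>\<bar> \<partial>M)
      + sqrt (2 * pi) / 4 * (\<integral>\<omega>. \<bar>ell \<bullet> R \<omega>\<bar> \<partial>M)"
    using cdf_error_bound[of z] by (simp add: cdf_def)
qed simp


lemma ennreal_kolmogorov_dist_le:
  "ennreal (kolmogorov_dist (distr M borel W) std_normal_distribution)
    \<le> (\<integral>\<^sup>+ \<omega>. ennreal \<bar>1 - cond_inner_D_mult_D \<omega> / (2 * lam)\<bar> \<partial>M)
      + ennreal (1 / lam) * (\<integral>\<^sup>+ \<omega>. ennreal \<bar>cond_abs_inner_D_mult_D \<omega>\<bar> \<partial>M)
      + ennreal (sqrt (2 * pi) / 4) * (\<integral>\<^sup>+ \<omega>. ennreal \<bar>ell \<bullet> R \<omega>\<bar> \<partial>M)"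
proof -
  let ?A = "\<integral>\<omega>. \<bar>1 - cond_inner_D_mult_D \<omega> / (2 * lam)\<bar> \<partial>M"
  let ?B = "\<integral>\<omega>. \<bar>cond_abs_inner_D_mult_D \<omega>\<bar> \<partial>M"
  let ?C = "\<integral>\<omega>. \<bar>ell \<bullet> R \<omega>\<bar> \<partial>M"
  have "0 \<le> ?A" "0 \<le> ?B" "0 \<le> ?C" "0 \<le> 1 / lam" "0 \<le> sqrt (2 * pi) / 4"
    using lam_pos by (auto intro!: integral_nonneg_AE)
  then have "ennreal (?A + 1 / lam * ?B + sqrt (2 * pi) / 4 * ?C)
      = ennreal ?A + ennreal (1 / lam) * ennreal ?B + ennreal (sqrt (2 * pi) / 4) * ennreal ?C"
    by (simp only: ennreal_plus ennreal_mult add_nonneg_nonneg mult_nonneg_nonneg)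
  moreover have "ennreal (kolmogorov_dist (distr M borel W) std_normal_distribution)
      \<le> ennreal (?A + 1 / lam * ?B + sqrt (2 * pi) / 4 * ?C)"
    using kolmogorov_dist_le by (rule ennreal_leI)
  ultimately show ?thesis
    using cond.real_cond_exp_int(1)[OF integrable_inner_D_mult_D]
      cond.real_cond_exp_int(1)[OF integrable_abs_inner_D_mult_D] ell_R_integrable
    by (simp add: nn_integral_eq_integral)
qed
end

theorem theorem1p4:
  fixes M :: "'a measure"
    and X X' R :: "'a \<Rightarrow> real ^ 'd"
    and \<Lambda> :: "real ^ 'd ^ 'd"
    and lam :: real
    and i :: 'd
    and D :: "'a \<Rightarrow> real ^ 'd"
    and ell :: "real ^ 'd"
  assumes "prob_space M"
    and X_meas: "X \<in> borel_measurable M" and X'_meas: "X' \<in> borel_measurable M"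
    and R_meas: "R \<in> borel_measurable M"
    and exch: "distr M borel (\<lambda>\<omega>. (X \<omega>, X' \<omega>)) = distr M borel (\<lambda>\<omega>. (X' \<omega>, X \<omega>))"
    and lam: "0 < lam" "lam < 1"
    and inv: "invertible \<Lambda>"
    and D_def: "D \<equiv> (\<lambda>\<omega>. X \<omega> - X' \<omega>)"
    and l_def: "ell \<equiv> matrix_inv \<Lambda> $ i"
    and D_int: "\<And>j. integrable M (\<lambda>\<omega>. D \<omega> $ j)"
    and DD_int: "\<And>j. integrable M (\<lambda>\<omega>. D \<omega> $ j * D \<omega> $ i)"
    and cond: "\<And>j. AE \<omega> in M. real_cond_exp M (sigma_rv M X) (\<lambda>\<omega>. D \<omega> $ j) \<omega>
                       = lam * (\<Lambda> *v X \<omega>) $ j + lam * R \<omega> $ j"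
  shows "ennreal (kolmogorov_dist (distr M borel (\<lambda>\<omega>. X \<omega> $ i))
                                  (density lborel std_normal_density))
    \<le> (\<integral>\<^sup>+ \<omega>. ennreal \<bar>1 - real_cond_exp M (sigma_rv M X)
                               (\<lambda>\<omega>. (ell \<bullet> D \<omega>) * D \<omega> $ i) \<omega> / (2 * lam)\<bar> \<partial>M)
      + ennreal (1 / lam) * (\<integral>\<^sup>+ \<omega>. ennreal \<bar>real_cond_exp M (sigma_rv M X)
                               (\<lambda>\<omega>. \<bar>ell \<bullet> D \<omega>\<bar> * D \<omega> $ i) \<omega>\<bar> \<partial>M)
      + ennreal (sqrt (2 * pi) / 4) * (\<integral>\<^sup>+ \<omega>. ennreal \<bar>ell \<bullet> R \<omega>\<bar> \<partial>M)"
proof -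
  interpret prob_space M by fact
  note [measurable] = X_meas X'_meas R_meas
  show ?thesis
  proof (cases "(\<integral>\<^sup>+ \<omega>. ennreal \<bar>ell \<bullet> R \<omega>\<bar> \<partial>M) = \<infinity>")
    case True
    then show ?thesis
      by (simp add: ennreal_mult_eq_top_iff)
  next
    case False
    then have "integrable M (\<lambda>\<omega>. ell \<bullet> R \<omega>)"
      by (intro integrableI_bounded) (auto simp: less_top)
    then interpret linear_regression_pair M X X' R \<Lambda> lam i ell
      using exch lam(1) inner_matrix_inv_row[OF inv] D_int DD_int cond
      by unfold_locales (simp_all add: l_def D_def)
    show ?thesis
      unfolding D_def by (rule ennreal_kolmogorov_dist_le)
  qed
qed

end
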